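(* Let $d>1$, let $E,F$ be complex elliptic curves, let $P\in E[d]$ and $Q\in F[d]$ be points of order exactly $d$, let $A=(E\times F)/\langle (P,Q)\rangle$ with quotient map $\mu$, and let $H$ be the polarisation on $A$ with $\mu^*H=\mathcal O_E(d\cdot 0)\boxtimes\mathcal O_F(d\cdot 0)$ (a polarisation of type $(1,d)$), with polarisation isogeny $\phi_H:A\to\hat A$. Identify $E$ with $\mu(E\times\{0\})$, $F$ with $\mu(\{0\}\times F)$, $P$ with $\mu(P,0)$ and $Q$ with $\mu(0,Q)$. Then $Q=-P$ in $A$, $E\cap F=\langle P\rangle\subseteq\ker\phi_H$, and $E\cap\ker\phi_H=F\cap\ker\phi_H=\langle P\rangle$. *)

theory Defs
  imports Complex_Main
begin

text \<open>Analytic (Appel-Humbert) model of complex elliptic curves and complex tori.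
A complex elliptic curve is C/Lambda with Lambda = Z w1 + Z w2, w1, w2 R-linearly
independent.  Points of the abelian surface A = (E x F)/<(P,Q)> = C^2/L are
cosets of the lattice L in C^2 (represented as complex x complex).\<close>

definition lattice :: "complex \<Rightarrow> complex \<Rightarrow> complex set" where
  "lattice w1 w2 = {of_int m * w1 + of_int n * w2 | m n. True}"

definition lattice_basis :: "complex \<Rightarrow> complex \<Rightarrow> bool" where
  "lattice_basis w1 w2 \<longleftrightarrow> Im (cnj w1 * w2) \<noteq> 0"

definition has_order :: "complex set \<Rightarrow> complex \<Rightarrow> nat \<Rightarrow> bool" where
  "has_order Lam p d \<longleftrightarrow> (\<forall>k::int. of_int k * p \<in> Lam \<longleftrightarrow> int d dvd k)"

text \<open>Lattice of A = (C/LE x C/LF)/<(p,q)>: LE x LF + Z (p,q).\<close>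
definition quot_lattice ::
  "complex set \<Rightarrow> complex set \<Rightarrow> complex \<Rightarrow> complex \<Rightarrow> (complex \<times> complex) set" where
  "quot_lattice LE LF p q =
     {(x + of_int k * p, y + of_int k * q) | x y k. x \<in> LE \<and> y \<in> LF}"

definition tclass :: "(complex \<times> complex) set \<Rightarrow> complex \<times> complex \<Rightarrow> (complex \<times> complex) set" where
  "tclass L v = {(fst v + fst l, snd v + snd l) | l. l \<in> L}"

definition covol :: "complex \<Rightarrow> complex \<Rightarrow> real" where
  "covol w1 w2 = \<bar>Im (cnj w1 * w2)\<bar>"

text \<open>Hermitian form on C^2 (first Chern class) of O_E(d.0) boxtimes O_F(d.0);
the Hermitian form of O_E(0) on C/(Z w1 + Z w2) is z * cnj w / covol w1 w2.\<close>
definition box_form ::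
  "nat \<Rightarrow> complex \<Rightarrow> complex \<Rightarrow> complex \<Rightarrow> complex \<Rightarrow>
     complex \<times> complex \<Rightarrow> complex \<times> complex \<Rightarrow> complex" where
  "box_form d w1 w2 e1 e2 v w =
     of_nat d * fst v * cnj (fst w) / of_real (covol w1 w2)
   + of_nat d * snd v * cnj (snd w) / of_real (covol e1 e2)"

text \<open>Kernel of phi_H : C^2/L \<rightarrow> dual, K(H) = Lambda(H)/L where
Lambda(H) = {v. Im H(v, L) \<subseteq> Z}.\<close>
definition pol_kernel ::
  "(complex \<times> complex) set \<Rightarrow> (complex \<times> complex \<Rightarrow> complex \<times> complex \<Rightarrow> complex)
     \<Rightarrow> (complex \<times> complex) set set" where
  "pol_kernel L H = {tclass L v | v. \<forall>l\<in>L. Im (H v l) \<in> \<int>}"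

definition E_image :: "(complex \<times> complex) set \<Rightarrow> (complex \<times> complex) set set" where
  "E_image L = {tclass L (z, 0) | z. True}"

definition F_image :: "(complex \<times> complex) set \<Rightarrow> (complex \<times> complex) set set" where
  "F_image L = {tclass L (0, z) | z. True}"

definition cyclic_sub :: "(complex \<times> complex) set \<Rightarrow> complex \<Rightarrow> (complex \<times> complex) set set" where
  "cyclic_sub L p = {tclass L (of_int k * p, 0) | k. True}"

end

theory Submission
  imports Defs "HOL-Library.Product_Plus"
begin

text \<open>The Riemann form \<open>E\<^sub>\<Lambda>(u, v) = Im (u \<cdot> cnj v) / covol\<close> of \<open>O(0)\<close> on \<open>C/\<Lambda>\<close> is
unimodular on \<open>\<Lambda>\<close>. The lattice of \<open>A\<close> is \<open>L = \<Lambda>\<^sub>E \<times> \<Lambda>\<^sub>F + \<int>(p, q)\<close> and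
\<open>Im H = d E\<^sub>E \<oplus> d E\<^sub>F\<close>. Since \<open>(p, q) \<in> L\<close>, \<open>\<mu>(0, q) = -\<mu>(p, 0)\<close> and \<open>E \<inter> F = \<langle>P\<rangle>\<close>.
A point \<open>\<mu>(z, 0)\<close> lies in \<open>K(H)\<close> iff \<open>d E\<^sub>E(z, x + j p) \<in> \<int>\<close> for all \<open>x \<in> \<Lambda>\<^sub>E\<close> and \<open>j \<in> \<int>\<close>.
Unimodularity forces \<open>d z \<in> \<Lambda>\<^sub>E\<close>, and integrality against \<open>p\<close> says that the coordinates of
\<open>d z\<close> and \<open>d p\<close> have determinant divisible by \<open>d\<close>. As \<open>P\<close> has order exactly \<open>d\<close>, the
coordinates of \<open>d p\<close> are coprime to \<open>d\<close>, so those of \<open>d z\<close> are a multiple of them mod \<open>d\<close>,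
i.e. \<open>z \<in> \<Lambda>\<^sub>E + \<int>p\<close>. The same argument applies to \<open>F\<close>.\<close>

lemma lattice_iff: "u \<in> lattice w1 w2 \<longleftrightarrow> (\<exists>m n::int. u = of_int m * w1 + of_int n * w2)"
  by (auto simp: lattice_def)

lemma zero_in_lattice: "0 \<in> lattice w1 w2"
  unfolding lattice_iff by (rule exI[of _ 0], rule exI[of _ 0]) simp

lemma generators_in_lattice: "w1 \<in> lattice w1 w2" "w2 \<in> lattice w1 w2"
proof -
  have "w1 = of_int 1 * w1 + of_int 0 * w2" "w2 = of_int 0 * w1 + of_int 1 * w2"
    by simp_all
  then show "w1 \<in> lattice w1 w2" "w2 \<in> lattice w1 w2"
    unfolding lattice_iff by blast+
qed

lemma lattice_diff:
  assumes "u \<in> lattice w1 w2" and "v \<in> lattice w1 w2"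
  shows "u - v \<in> lattice w1 w2"
proof -
  from assms obtain m n m' n' :: int where "u = of_int m * w1 + of_int n * w2" "v = of_int m' * w1 + of_int n' * w2"
    unfolding lattice_iff by blast
  then have "u - v = of_int (m - m') * w1 + of_int (n - n') * w2"
    by (simp add: algebra_simps)
  then show ?thesis
    unfolding lattice_iff by blast
qed

text \<open>The Riemann form \<open>E = Im H\<close> of the principal polarisation \<open>O(0)\<close> of \<open>C/(\<int>w1 + \<int>w2)\<close>.\<close>

definition alt_form :: "complex \<Rightarrow> complex \<Rightarrow> complex \<Rightarrow> complex \<Rightarrow> real" where
  "alt_form w1 w2 u v = Im (u * cnj v) / covol w1 w2"

lemma alt_form_add_left: "alt_form w1 w2 (u + u') v = alt_form w1 w2 u v + alt_form w1 w2 u' v"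
  by (cases "covol w1 w2 = 0") (simp_all add: alt_form_def field_simps)

lemma alt_form_lattice_coords:
  "alt_form w1 w2 (of_int m * w1 + of_int n * w2) (of_int m' * w1 + of_int n' * w2)
     = of_int (n * m' - m * n') * sgn (Im (cnj w1 * w2))"
proof -
  let ?D = "Im (cnj w1 * w2)"
  have "Im ((of_int m * w1 + of_int n * w2) * cnj (of_int m' * w1 + of_int n' * w2))
      = of_int (n * m' - m * n') * ?D"
    by (simp add: algebra_simps)
  then show ?thesis
    by (simp add: alt_form_def covol_def real_sgn_eq)
qed

lemma Ints_sgn_real: "sgn (x::real) \<in> \<int>"
  by (simp add: sgn_real_def)

lemma alt_form_lattice_Ints:
  "u \<in> lattice w1 w2 \<Longrightarrow> v \<in> lattice w1 w2 \<Longrightarrow> alt_form w1 w2 u v \<in> \<int>"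
  unfolding lattice_iff by (auto simp: alt_form_lattice_coords Ints_sgn_real)

lemma lattice_coords_identity:
  "of_real (Im (cnj w1 * w2)) * z = of_real (Im (z * cnj w1)) * w2 - of_real (Im (z * cnj w2)) * w1"
  by (simp add: complex_eq_iff algebra_simps)

lemma alt_form_coords:
  assumes "lattice_basis w1 w2"
  shows "of_real (sgn (Im (cnj w1 * w2))) * z
    = of_real (alt_form w1 w2 z w1) * w2 - of_real (alt_form w1 w2 z w2) * w1"
proof -
  define D A B where "D = Im (cnj w1 * w2)" and "A = Im (z * cnj w1)" and "B = Im (z * cnj w2)"
  have "\<bar>D\<bar> \<noteq> 0"
    using assms by (simp add: lattice_basis_def D_def)
  moreover have "of_real D * z = of_real A * w2 - of_real B * w1"
    unfolding D_def A_def B_def by (rule lattice_coords_identity)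
  ultimately have "of_real (D / \<bar>D\<bar>) * z = of_real (A / \<bar>D\<bar>) * w2 - of_real (B / \<bar>D\<bar>) * w1"
    by (simp add: field_simps)
  then show ?thesis
    by (simp add: alt_form_def covol_def real_sgn_eq D_def A_def B_def)
qed

lemma alt_form_Ints_imp_lattice:
  assumes "lattice_basis w1 w2"
    and "alt_form w1 w2 z w1 \<in> \<int>" "alt_form w1 w2 z w2 \<in> \<int>"
  shows "z \<in> lattice w1 w2"
proof -
  let ?D = "Im (cnj w1 * w2)"
  obtain a b \<sigma> :: int where ints: "alt_form w1 w2 z w1 = of_int a" "alt_form w1 w2 z w2 = of_int b"
    "sgn ?D = of_int \<sigma>"
    using assms(2,3) Ints_sgn_real by (metis Ints_cases)
  have "sgn ?D * sgn ?D = 1"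
    using assms(1) by (simp add: lattice_basis_def sgn_real_def)
  then have "z = of_real (sgn ?D) * (of_real (sgn ?D) * z)"
    by (metis mult.assoc mult_1 of_real_1 of_real_mult)
  also have "\<dots> = of_int (- \<sigma> * b) * w1 + of_int (\<sigma> * a) * w2"
    unfolding alt_form_coords[OF assms(1), of z] unfolding ints by (simp add: algebra_simps)
  finally show ?thesis
    unfolding lattice_iff by blast
qed

lemma alt_form_torsion_Ints:
  assumes "of_nat d * p \<in> lattice w1 w2" "x \<in> lattice w1 w2" "x' \<in> lattice w1 w2"
  shows "of_nat d * alt_form w1 w2 (x + of_int k * p) (x' + of_int j * p) \<in> \<int>"
proof -
  have "of_nat d * alt_form w1 w2 (x + of_int k * p) (x' + of_int j * p)
      = of_nat d * alt_form w1 w2 x x' + of_int j * alt_form w1 w2 x (of_nat d * p)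
        + of_int k * alt_form w1 w2 (of_nat d * p) x'"
    by (cases "covol w1 w2 = 0") (simp_all add: alt_form_def field_simps)
  also have "\<dots> \<in> \<int>"
    using assms by (intro Ints_add Ints_mult alt_form_lattice_Ints) auto
  finally show ?thesis .
qed

lemma det_dvd_imp_cong_multiple:
  fixes a b s t n :: int
  assumes "gcd (gcd a b) n = 1" and "n dvd s * b - t * a"
  shows "\<exists>k. n dvd s - k * a \<and> n dvd t - k * b"
proof -
  obtain u v where uv: "u * a + v * b = gcd a b"
    using bezout_int by blast
  obtain u' w where "u' * gcd a b + w * n = 1"
    using bezout_int assms(1) by metis
  then have bezout: "(u' * u) * a + (u' * v) * b + w * n = 1"
    unfolding uv [symmetric] by (simp add: algebra_simps)
  obtain c where c: "s * b - t * a = n * c"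
    using assms(2) by blast
  define k where "k = u' * u * s + u' * v * t"
  have "n dvd s - k * a"
  proof -
    have "s - k * a = s * ((u' * u) * a + (u' * v) * b + w * n) - k * a"
      by (simp add: bezout)
    also have "\<dots> = u' * v * (s * b - t * a) + s * w * n"
      by (simp add: k_def algebra_simps)
    also have "\<dots> = n * (u' * v * c + s * w)"
      unfolding c by (simp add: algebra_simps)
    finally show ?thesis
      by simp
  qed
  moreover have "n dvd t - k * b"
  proof -
    have "t - k * b = t * ((u' * u) * a + (u' * v) * b + w * n) - k * b"
      by (simp add: bezout)
    also have "\<dots> = - u' * u * (s * b - t * a) + t * w * n"
      by (simp add: k_def algebra_simps)
    also have "\<dots> = n * (t * w - u' * u * c)"
      unfolding c by (simp add: algebra_simps)
    finally show ?thesis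
      by simp
  qed
  ultimately show ?thesis
    by blast
qed

lemma has_order_mult_mem: "has_order Lam p d \<Longrightarrow> of_nat d * p \<in> Lam"
  unfolding has_order_def by (metis dvd_refl of_int_of_nat_eq)

lemma has_order_coords_coprime:
  assumes "has_order (lattice w1 w2) p d" and "d > 0"
    and "of_nat d * p = of_int a * w1 + of_int b * w2"
  shows "gcd (gcd a b) (int d) = 1"
proof -
  define g where "g = gcd (gcd a b) (int d)"
  have "g dvd a" "g dvd b" "g dvd int d"
    unfolding g_def by (meson dvd_trans gcd_dvd1 gcd_dvd2)+
  then obtain a' b' d' where a': "a = g * a'" and b': "b = g * b'" and d': "int d = g * d'"
    by (elim dvdE)
  have "g > 0" "d' \<noteq> 0"
    using assms(2) d' by (auto simp: g_def)
  have "of_int g * (of_int d' * p) = (of_nat d * p :: complex)"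
    by (metis d' mult.assoc of_int_mult of_int_of_nat_eq)
  also have "\<dots> = of_int g * (of_int a' * w1 + of_int b' * w2)"
    unfolding assms(3) a' b' by (simp add: algebra_simps)
  finally have "of_int g * (of_int d' * p) = of_int g * (of_int a' * w1 + of_int b' * w2)" .
  then have "of_int d' * p \<in> lattice w1 w2"
    using \<open>g > 0\<close> unfolding lattice_iff by auto
  then have "d' * g dvd d'"
    using assms(1) d' unfolding has_order_def by (simp add: mult.commute)
  then show ?thesis
    using \<open>g > 0\<close> \<open>d' \<noteq> 0\<close> zdvd_mult_cancel1 g_def by simp
qed

lemma torsion_dual_imp_coset:
  assumes basis: "lattice_basis w1 w2" and order: "has_order (lattice w1 w2) p d" and "d > 0"
    and dual: "\<forall>x\<in>lattice w1 w2. of_nat d * alt_form w1 w2 z x \<in> \<int>"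
    and "of_nat d * alt_form w1 w2 z p \<in> \<int>"
  shows "\<exists>k::int. z - of_int k * p \<in> lattice w1 w2"
proof -
  have scale: "alt_form w1 w2 (of_nat d * u) v = of_nat d * alt_form w1 w2 u v"
    "alt_form w1 w2 u (of_nat d * v) = of_nat d * alt_form w1 w2 u v" for u v
    by (simp_all add: alt_form_def algebra_simps)
  have "of_nat d * z \<in> lattice w1 w2"
    using dual generators_in_lattice
    by (intro alt_form_Ints_imp_lattice [OF basis]) (simp_all add: scale)
  then obtain s t :: int where s_t: "of_nat d * z = of_int s * w1 + of_int t * w2"
    unfolding lattice_iff by blast
  obtain a b :: int where a_b: "of_nat d * p = of_int a * w1 + of_int b * w2"
    using has_order_mult_mem [OF order] unfolding lattice_iff by blast
  obtain c :: int where c: "of_nat d * alt_form w1 w2 z p = of_int c"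
    using assms(5) by (blast elim: Ints_cases)
  \<comment> \<open>\<open>E(d z, d p) = d \<cdot> d E(z, p)\<close> is a multiple of \<open>d\<close>; in coordinates it is \<open>\<plusminus>(t a - s b)\<close>.\<close>
  have "of_int (t * a - s * b) * sgn (Im (cnj w1 * w2))
      = alt_form w1 w2 (of_nat d * z) (of_nat d * p)"
    unfolding s_t a_b by (rule alt_form_lattice_coords [symmetric])
  also have "\<dots> = of_int (int d * c)"
    by (simp add: scale c)
  finally have "\<bar>of_int (t * a - s * b) * sgn (Im (cnj w1 * w2))\<bar> = \<bar>of_int (int d * c) :: real\<bar>"
    by simp
  then have "of_int \<bar>t * a - s * b\<bar> = (of_int \<bar>int d * c\<bar> :: real)"
    using basis by (simp add: abs_mult lattice_basis_def)
  then have "\<bar>t * a - s * b\<bar> = \<bar>int d * c\<bar>"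
    by (simp only: of_int_eq_iff)
  then have "int d dvd s * b - t * a"
    by (metis dvd_abs_iff dvd_minus_iff dvd_triv_left minus_diff_eq)
  then obtain k where "int d dvd s - k * a" and "int d dvd t - k * b"
    using det_dvd_imp_cong_multiple [OF has_order_coords_coprime [OF order \<open>d > 0\<close> a_b]] by blast
  then obtain M N where M: "s - k * a = int d * M" and N: "t - k * b = int d * N"
    by (auto elim!: dvdE)
  have "of_nat d * (z - of_int k * p) = of_nat d * z - of_int k * (of_nat d * p)"
    by (simp add: algebra_simps)
  also have "\<dots> = of_int (s - k * a) * w1 + of_int (t - k * b) * w2"
    unfolding s_t a_b by (simp add: algebra_simps)
  also have "\<dots> = of_nat d * (of_int M * w1 + of_int N * w2)"
    unfolding M N by (simp add: algebra_simps)
  finally have "of_nat d * (z - of_int k * p) = of_nat d * (of_int M * w1 + of_int N * w2)" .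
  then have "z - of_int k * p = of_int M * w1 + of_int N * w2"
    using \<open>d > 0\<close> by simp
  then show ?thesis
    unfolding lattice_iff by blast
qed

lemma torsion_dual_iff:
  assumes basis: "lattice_basis w1 w2" and order: "has_order (lattice w1 w2) p d" and "d > 0"
  shows "(\<forall>x\<in>lattice w1 w2. \<forall>j::int. of_nat d * alt_form w1 w2 z (x + of_int j * p) \<in> \<int>)
    \<longleftrightarrow> (\<exists>k::int. z - of_int k * p \<in> lattice w1 w2)"
proof
  assume dual: "\<forall>x\<in>lattice w1 w2. \<forall>j::int. of_nat d * alt_form w1 w2 z (x + of_int j * p) \<in> \<int>"
  show "\<exists>k::int. z - of_int k * p \<in> lattice w1 w2"
  proof (rule torsion_dual_imp_coset [OF basis order \<open>d > 0\<close>])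
    show "\<forall>x\<in>lattice w1 w2. of_nat d * alt_form w1 w2 z x \<in> \<int>"
      using dual by (metis add.right_neutral mult_zero_left of_int_0)
    show "of_nat d * alt_form w1 w2 z p \<in> \<int>"
      using dual zero_in_lattice by (metis add_0 mult_1 of_int_1)
  qed
next
  assume "\<exists>k::int. z - of_int k * p \<in> lattice w1 w2"
  then obtain k where "z - of_int k * p \<in> lattice w1 w2" ..
  show "\<forall>x\<in>lattice w1 w2. \<forall>j::int. of_nat d * alt_form w1 w2 z (x + of_int j * p) \<in> \<int>"
  proof (intro ballI allI)
    fix x j
    assume "x \<in> lattice w1 w2"
    from alt_form_torsion_Ints [OF has_order_mult_mem [OF order] \<open>z - of_int k * p \<in> _\<close> this, of k j]
    show "of_nat d * alt_form w1 w2 z (x + of_int j * p) \<in> \<int>"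
      by simp
  qed
qed

lemma mem_tclass_iff: "w \<in> tclass L v \<longleftrightarrow> w - v \<in> L"
proof
  assume "w \<in> tclass L v"
  then obtain l where "l \<in> L" and "w = (fst v + fst l, snd v + snd l)"
    unfolding tclass_def by blast
  then have "w - v = l"
    by (simp add: prod_eq_iff)
  with \<open>l \<in> L\<close> show "w - v \<in> L"
    by simp
next
  assume "w - v \<in> L"
  then show "w \<in> tclass L v"
    unfolding tclass_def by (intro CollectI exI [of _ "w - v"]) (simp add: prod_eq_iff)
qed

lemma tclass_eq_iff:
  assumes "0 \<in> L" and diff_closed: "\<And>a b. a \<in> L \<Longrightarrow> b \<in> L \<Longrightarrow> a - b \<in> L"
  shows "tclass L u = tclass L v \<longleftrightarrow> u - v \<in> L"
proof
  assume "tclass L u = tclass L v"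
  then show "u - v \<in> L"
    using assms(1) by (metis diff_self mem_tclass_iff)
next
  assume "u - v \<in> L"
  then have "v - u \<in> L"
    using diff_closed [OF assms(1)] by (metis minus_diff_eq diff_0)
  have "w - u \<in> L \<longleftrightarrow> w - v \<in> L" for w
    using diff_closed [OF _ \<open>u - v \<in> L\<close>, of "w - v"] diff_closed [OF _ \<open>v - u \<in> L\<close>, of "w - u"]
    by (auto simp: algebra_simps)
  then show "tclass L u = tclass L v"
    by (auto simp: mem_tclass_iff)
qed

lemma mem_quot_lattice_iff:
  "v \<in> quot_lattice LE LF p q \<longleftrightarrow> (\<exists>x\<in>LE. \<exists>y\<in>LF. \<exists>k::int. v = (x + of_int k * p, y + of_int k * q))"
  by (auto simp: quot_lattice_def)

lemma quot_lattice_memI: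
  "x \<in> LE \<Longrightarrow> y \<in> LF \<Longrightarrow> (x + of_int k * p, y + of_int k * q) \<in> quot_lattice LE LF p q"
  unfolding mem_quot_lattice_iff by blast

lemma zero_in_quot_lattice: "0 \<in> quot_lattice (lattice w1 w2) (lattice e1 e2) p q"
  using quot_lattice_memI [OF zero_in_lattice zero_in_lattice, of 0] by (simp add: zero_prod_def)

lemma quot_lattice_diff:
  assumes "a \<in> quot_lattice (lattice w1 w2) (lattice e1 e2) p q"
    and "b \<in> quot_lattice (lattice w1 w2) (lattice e1 e2) p q"
  shows "a - b \<in> quot_lattice (lattice w1 w2) (lattice e1 e2) p q"
proof -
  obtain x y k x' y' k' where "x \<in> lattice w1 w2" "y \<in> lattice e1 e2" "x' \<in> lattice w1 w2" "y' \<in> lattice e1 e2"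
    and "a = (x + of_int k * p, y + of_int k * q)" "b = (x' + of_int k' * p, y' + of_int k' * q)"
    using assms unfolding mem_quot_lattice_iff by blast
  then show ?thesis
    using quot_lattice_memI [OF lattice_diff lattice_diff, of x w1 w2 x' y e1 e2 y' "k - k'" p q]
    by (simp add: algebra_simps)
qed

lemma Im_box_form:
  "Im (box_form d w1 w2 e1 e2 v w)
    = of_nat d * alt_form w1 w2 (fst v) (fst w) + of_nat d * alt_form e1 e2 (snd v) (snd w)"
  by (simp add: box_form_def alt_form_def algebra_simps)

lemma Im_box_form_add_left:
  "Im (box_form d w1 w2 e1 e2 (u + v) l)
    = Im (box_form d w1 w2 e1 e2 u l) + Im (box_form d w1 w2 e1 e2 v l)"
  by (simp add: Im_box_form alt_form_add_left algebra_simps)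

lemma tclass_in_pol_kernel_iff:
  assumes "0 \<in> L"
    and integral: "\<And>a b. a \<in> L \<Longrightarrow> b \<in> L \<Longrightarrow> Im (H a b) \<in> \<int>"
    and additive: "\<And>u v l. Im (H (u + v) l) = Im (H u l) + Im (H v l)"
  shows "tclass L v \<in> pol_kernel L H \<longleftrightarrow> (\<forall>l\<in>L. Im (H v l) \<in> \<int>)"
proof
  assume "tclass L v \<in> pol_kernel L H"
  then obtain v' where eq: "tclass L v = tclass L v'" and v': "\<forall>l\<in>L. Im (H v' l) \<in> \<int>"
    unfolding pol_kernel_def by blast
  have "v - v' \<in> L"
    using eq assms(1) by (metis diff_self mem_tclass_iff)
  show "\<forall>l\<in>L. Im (H v l) \<in> \<int>"
    using v' integral [OF \<open>v - v' \<in> L\<close>] additive [of v' "v - v'"] by simp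
qed (unfold pol_kernel_def, blast)

locale elliptic_product_quotient =
  fixes d :: nat and w1 w2 e1 e2 p q :: complex
  assumes d_pos: "d > 0"
    and basis_E: "lattice_basis w1 w2" and basis_F: "lattice_basis e1 e2"
    and order_p: "has_order (lattice w1 w2) p d" and order_q: "has_order (lattice e1 e2) q d"
begin

abbreviation \<Lambda> :: "(complex \<times> complex) set" where
  "\<Lambda> \<equiv> quot_lattice (lattice w1 w2) (lattice e1 e2) p q"

abbreviation \<H> :: "complex \<times> complex \<Rightarrow> complex \<times> complex \<Rightarrow> complex" where
  "\<H> \<equiv> box_form d w1 w2 e1 e2"

lemma mem_\<Lambda>I:
  "x \<in> lattice w1 w2 \<Longrightarrow> y \<in> lattice e1 e2 \<Longrightarrow> (x + of_int k * p, y + of_int k * q) \<in> \<Lambda>"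
  by (rule quot_lattice_memI)

lemma point_eq_iff: "tclass \<Lambda> u = tclass \<Lambda> v \<longleftrightarrow> u - v \<in> \<Lambda>"
  by (rule tclass_eq_iff [OF zero_in_quot_lattice quot_lattice_diff])

lemma Im_box_form_Ints:
  assumes "a \<in> \<Lambda>" and "b \<in> \<Lambda>"
  shows "Im (\<H> a b) \<in> \<int>"
proof -
  obtain x y k x' y' j where "x \<in> lattice w1 w2" "y \<in> lattice e1 e2" "x' \<in> lattice w1 w2" "y' \<in> lattice e1 e2"
    and "a = (x + of_int k * p, y + of_int k * q)" and "b = (x' + of_int j * p, y' + of_int j * q)"
    using assms unfolding mem_quot_lattice_iff by blast
  then show ?thesis
    unfolding Im_box_form
    by (simp add: Ints_add alt_form_torsion_Ints has_order_mult_mem order_p order_q)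
qed

lemma point_in_pol_kernel_iff: "tclass \<Lambda> v \<in> pol_kernel \<Lambda> \<H> \<longleftrightarrow> (\<forall>l\<in>\<Lambda>. Im (\<H> v l) \<in> \<int>)"
  by (rule tclass_in_pol_kernel_iff [OF zero_in_quot_lattice Im_box_form_Ints Im_box_form_add_left])

lemma E_point_in_pol_kernel_iff:
  "tclass \<Lambda> (z, 0) \<in> pol_kernel \<Lambda> \<H> \<longleftrightarrow> (\<exists>k::int. z - of_int k * p \<in> lattice w1 w2)"
proof -
  have Im_H: "Im (\<H> (z, 0) l) = of_nat d * alt_form w1 w2 z (fst l)" for l
    by (simp add: Im_box_form alt_form_def)
  have "(\<forall>l\<in>\<Lambda>. Im (\<H> (z, 0) l) \<in> \<int>)
      \<longleftrightarrow> (\<forall>x\<in>lattice w1 w2. \<forall>j::int. of_nat d * alt_form w1 w2 z (x + of_int j * p) \<in> \<int>)"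
  proof
    assume kernel: "\<forall>l\<in>\<Lambda>. Im (\<H> (z, 0) l) \<in> \<int>"
    show "\<forall>x\<in>lattice w1 w2. \<forall>j::int. of_nat d * alt_form w1 w2 z (x + of_int j * p) \<in> \<int>"
    proof (intro ballI allI)
      fix x and j :: int
      assume "x \<in> lattice w1 w2"
      have "Im (\<H> (z, 0) (x + of_int j * p, 0 + of_int j * q)) \<in> \<int>"
        using kernel mem_\<Lambda>I [OF \<open>x \<in> _\<close> zero_in_lattice] by blast
      then show "of_nat d * alt_form w1 w2 z (x + of_int j * p) \<in> \<int>"
        by (simp add: Im_H)
    qed
  qed (auto simp: mem_quot_lattice_iff Im_H)
  then show ?thesis
    using point_in_pol_kernel_iff torsion_dual_iff [OF basis_E order_p d_pos] by simp
qed

lemma F_point_in_pol_kernel_iff: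
  "tclass \<Lambda> (0, z) \<in> pol_kernel \<Lambda> \<H> \<longleftrightarrow> (\<exists>k::int. z - of_int k * q \<in> lattice e1 e2)"
proof -
  have Im_H: "Im (\<H> (0, z) l) = of_nat d * alt_form e1 e2 z (snd l)" for l
    by (simp add: Im_box_form alt_form_def)
  have "(\<forall>l\<in>\<Lambda>. Im (\<H> (0, z) l) \<in> \<int>)
      \<longleftrightarrow> (\<forall>y\<in>lattice e1 e2. \<forall>j::int. of_nat d * alt_form e1 e2 z (y + of_int j * q) \<in> \<int>)"
  proof
    assume kernel: "\<forall>l\<in>\<Lambda>. Im (\<H> (0, z) l) \<in> \<int>"
    show "\<forall>y\<in>lattice e1 e2. \<forall>j::int. of_nat d * alt_form e1 e2 z (y + of_int j * q) \<in> \<int>"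
    proof (intro ballI allI)
      fix y and j :: int
      assume "y \<in> lattice e1 e2"
      have "Im (\<H> (0, z) (0 + of_int j * p, y + of_int j * q)) \<in> \<int>"
        using kernel mem_\<Lambda>I [OF zero_in_lattice \<open>y \<in> _\<close>] by blast
      then show "of_nat d * alt_form e1 e2 z (y + of_int j * q) \<in> \<int>"
        by (simp add: Im_H)
    qed
  qed (auto simp: mem_quot_lattice_iff Im_H)
  then show ?thesis
    using point_in_pol_kernel_iff torsion_dual_iff [OF basis_F order_q d_pos] by simp
qed

lemma tclass_q_eq_neg_p: "tclass \<Lambda> (0, q) = tclass \<Lambda> (- p, 0)"
  unfolding point_eq_iff using mem_\<Lambda>I [OF zero_in_lattice zero_in_lattice, of 1] by simp

lemma E_point_in_cyclic_sub:
  assumes "z - of_int k * p \<in> lattice w1 w2"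
  shows "tclass \<Lambda> (z, 0) \<in> cyclic_sub \<Lambda> p"
proof -
  have "tclass \<Lambda> (z, 0) = tclass \<Lambda> (of_int k * p, 0)"
    unfolding point_eq_iff using mem_\<Lambda>I [OF assms zero_in_lattice, of 0] by simp
  then show ?thesis
    unfolding cyclic_sub_def by blast
qed

lemma F_point_in_cyclic_sub:
  assumes "z - of_int k * q \<in> lattice e1 e2"
  shows "tclass \<Lambda> (0, z) \<in> cyclic_sub \<Lambda> p"
proof -
  have "tclass \<Lambda> (0, z) = tclass \<Lambda> (of_int (- k) * p, 0)"
    unfolding point_eq_iff using mem_\<Lambda>I [OF zero_in_lattice assms, of k] by simp
  then show ?thesis
    unfolding cyclic_sub_def by blast
qed

lemma cyclic_sub_subset_E_image: "cyclic_sub \<Lambda> p \<subseteq> E_image \<Lambda>"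
  unfolding cyclic_sub_def E_image_def by blast

lemma cyclic_sub_subset_F_image: "cyclic_sub \<Lambda> p \<subseteq> F_image \<Lambda>"
proof
  fix X
  assume "X \<in> cyclic_sub \<Lambda> p"
  then obtain k where "X = tclass \<Lambda> (of_int k * p, 0)"
    unfolding cyclic_sub_def by blast
  also have "\<dots> = tclass \<Lambda> (0, of_int (- k) * q)"
    unfolding point_eq_iff using mem_\<Lambda>I [OF zero_in_lattice zero_in_lattice, of k] by simp
  finally show "X \<in> F_image \<Lambda>"
    unfolding F_image_def by blast
qed

lemma cyclic_sub_subset_pol_kernel: "cyclic_sub \<Lambda> p \<subseteq> pol_kernel \<Lambda> \<H>"
proof
  fix X
  assume "X \<in> cyclic_sub \<Lambda> p"
  then obtain k where "X = tclass \<Lambda> (of_int k * p, 0)"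
    unfolding cyclic_sub_def by blast
  moreover have "of_int k * p - of_int k * p \<in> lattice w1 w2"
    by (simp add: zero_in_lattice)
  ultimately show "X \<in> pol_kernel \<Lambda> \<H>"
    using E_point_in_pol_kernel_iff by blast
qed

lemma E_image_inter_F_image: "E_image \<Lambda> \<inter> F_image \<Lambda> = cyclic_sub \<Lambda> p"
proof
  show "E_image \<Lambda> \<inter> F_image \<Lambda> \<subseteq> cyclic_sub \<Lambda> p"
  proof
    fix X
    assume "X \<in> E_image \<Lambda> \<inter> F_image \<Lambda>"
    then obtain z w where X: "X = tclass \<Lambda> (z, 0)" and "X = tclass \<Lambda> (0, w)"
      unfolding E_image_def F_image_def by blast
    then have "(z, - w) \<in> \<Lambda>"
      using point_eq_iff [of "(z, 0)" "(0, w)"] by simp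
    then obtain x k where "x \<in> lattice w1 w2" and "z = x + of_int k * p"
      unfolding mem_quot_lattice_iff by auto
    then show "X \<in> cyclic_sub \<Lambda> p"
      unfolding X by (intro E_point_in_cyclic_sub [of z k]) simp
  qed
qed (use cyclic_sub_subset_E_image cyclic_sub_subset_F_image in blast)

lemma E_image_inter_pol_kernel: "E_image \<Lambda> \<inter> pol_kernel \<Lambda> \<H> = cyclic_sub \<Lambda> p"
proof
  show "E_image \<Lambda> \<inter> pol_kernel \<Lambda> \<H> \<subseteq> cyclic_sub \<Lambda> p"
    unfolding E_image_def using E_point_in_pol_kernel_iff E_point_in_cyclic_sub by blast
qed (use cyclic_sub_subset_E_image cyclic_sub_subset_pol_kernel in blast)

lemma F_image_inter_pol_kernel: "F_image \<Lambda> \<inter> pol_kernel \<Lambda> \<H> = cyclic_sub \<Lambda> p"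
proof
  show "F_image \<Lambda> \<inter> pol_kernel \<Lambda> \<H> \<subseteq> cyclic_sub \<Lambda> p"
    unfolding F_image_def using F_point_in_pol_kernel_iff F_point_in_cyclic_sub by blast
qed (use cyclic_sub_subset_F_image cyclic_sub_subset_pol_kernel in blast)

end

theorem lemma2p4:
  fixes d :: nat and w1 w2 e1 e2 p q :: complex
  assumes "d > 1"
    and "lattice_basis w1 w2" and "lattice_basis e1 e2"
    and "has_order (lattice w1 w2) p d" and "has_order (lattice e1 e2) q d"
  defines "L \<equiv> quot_lattice (lattice w1 w2) (lattice e1 e2) p q"
    and "H \<equiv> box_form d w1 w2 e1 e2"
  shows "tclass L (0, q) = tclass L (- p, 0)
    \<and> E_image L \<inter> F_image L = cyclic_sub L p
    \<and> cyclic_sub L p \<subseteq> pol_kernel L H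
    \<and> E_image L \<inter> pol_kernel L H = cyclic_sub L p
    \<and> F_image L \<inter> pol_kernel L H = cyclic_sub L p"
proof -
  interpret elliptic_product_quotient d w1 w2 e1 e2 p q
    using assms(1-5) by unfold_locales simp_all
  show ?thesis
    unfolding L_def H_def
    using tclass_q_eq_neg_p E_image_inter_F_image cyclic_sub_subset_pol_kernel
      E_image_inter_pol_kernel F_image_inter_pol_kernel
    by blast
qed

end
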